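(* Let $G\in\Gamma$ be twin-free with $\|G\|<\frac1{15}(9+4\sqrt6)$ (the Schur norm of $\begin{bmatrix}1&1&0\\1&1&1\\0&1&0\end{bmatrix}$). Then (1) $G$ has no induced subgraph isomorphic to the bipartite graph with biadjacency matrix $\begin{bmatrix}1&1&0\\1&1&1\end{bmatrix}$; and (2) every vertex of $G$ has degree at most $3$.
   Context: $\Gamma$ is the collection of all bipartite graphs $G\subseteq R\times C$ with $|R|,|C|\in\{1,2,\dots\}\cup\{\aleph_0\}$; the biadjacency matrix $M(G)$ has $(i,j)$ entry $1$ iff $(r_i,c_j)$ is an edge. $\|G\|$ is the Schur norm $\|M(G)\|_\bullet=\sup\{\|M(G)\bullet X\|:\|X\|\le1\}$ (entrywise product, operator norm on $\ell^2$ spaces over $\mathbb F\in\{\mathbb R,\mathbb C\}$). Induced subgraphs are $G\cap(R_0\times C_0)$; isomorphisms of bipartite graphs may swap the two sides. Two vertices are twins if they have the same neighbour sets; twin-free means no two distinct vertices are twins. *)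

theory Defs
  imports "HOL-Analysis.Analysis"
begin

text \<open>A bipartite graph in Gamma is represented by a nonempty row set R, a nonempty
column set C (subsets of nat, hence of cardinality 1,2,... or aleph_0) and an edge set
G with G \<subseteq> R \<times> C. Row i and column j are distinct vertices even if i = j
as numbers.\<close>

definition in_Gamma :: "nat set \<Rightarrow> nat set \<Rightarrow> (nat \<times> nat) set \<Rightarrow> bool" where
  "in_Gamma R C G \<longleftrightarrow> R \<noteq> {} \<and> C \<noteq> {} \<and> G \<subseteq> R \<times> C"

text \<open>Operator norm (on l2 spaces) of a matrix indexed by R x C, possibly infinite
(value in ereal); computed as the supremum of the bilinear form over finitely supported
vectors in the unit balls.\<close>

definition op_norm :: "nat set \<Rightarrow> nat set \<Rightarrow> (nat \<Rightarrow> nat \<Rightarrow> 'f::real_normed_field) \<Rightarrow> ereal" where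
  "op_norm R C A = Sup { ereal (norm (\<Sum>i\<in>F1. \<Sum>j\<in>F2. u i * A i j * v j)) | F1 F2 u v.
      finite F1 \<and> F1 \<subseteq> R \<and> finite F2 \<and> F2 \<subseteq> C \<and>
      (\<Sum>i\<in>F1. (norm (u i))\<^sup>2) \<le> 1 \<and> (\<Sum>j\<in>F2. (norm (v j))\<^sup>2) \<le> 1 }"

definition biadj :: "(nat \<times> nat) set \<Rightarrow> nat \<Rightarrow> nat \<Rightarrow> 'f::real_normed_field" where
  "biadj G i j = (if (i, j) \<in> G then 1 else 0)"

definition schur_norm :: "'f::real_normed_field itself \<Rightarrow> nat set \<Rightarrow> nat set \<Rightarrow> (nat \<times> nat) set \<Rightarrow> ereal" where
  "schur_norm _ R C G = Sup { op_norm R C (\<lambda>i j. (biadj G i j :: 'f) * X i j) | X :: nat \<Rightarrow> nat \<Rightarrow> 'f.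
      op_norm R C X \<le> 1 }"

definition row_nbrs :: "nat set \<Rightarrow> (nat \<times> nat) set \<Rightarrow> nat \<Rightarrow> nat set" where
  "row_nbrs C G r = {c \<in> C. (r, c) \<in> G}"

definition col_nbrs :: "nat set \<Rightarrow> (nat \<times> nat) set \<Rightarrow> nat \<Rightarrow> nat set" where
  "col_nbrs R G c = {r \<in> R. (r, c) \<in> G}"

definition twin_free :: "nat set \<Rightarrow> nat set \<Rightarrow> (nat \<times> nat) set \<Rightarrow> bool" where
  "twin_free R C G \<longleftrightarrow>
     (\<forall>r1\<in>R. \<forall>r2\<in>R. row_nbrs C G r1 = row_nbrs C G r2 \<longrightarrow> r1 = r2) \<and>
     (\<forall>c1\<in>C. \<forall>c2\<in>C. col_nbrs R G c1 = col_nbrs R G c2 \<longrightarrow> c1 = c2)"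

definition bip_iso :: "nat set \<Rightarrow> nat set \<Rightarrow> (nat \<times> nat) set \<Rightarrow> nat set \<Rightarrow> nat set \<Rightarrow> (nat \<times> nat) set \<Rightarrow> bool" where
  "bip_iso R1 C1 G1 R2 C2 G2 \<longleftrightarrow>
     (\<exists>f g. bij_betw f R1 R2 \<and> bij_betw g C1 C2 \<and>
        (\<forall>r\<in>R1. \<forall>c\<in>C1. (r, c) \<in> G1 \<longleftrightarrow> (f r, g c) \<in> G2)) \<or>
     (\<exists>f g. bij_betw f R1 C2 \<and> bij_betw g C1 R2 \<and>
        (\<forall>r\<in>R1. \<forall>c\<in>C1. (r, c) \<in> G1 \<longleftrightarrow> (g c, f r) \<in> G2))"

definition has_induced :: "nat set \<Rightarrow> nat set \<Rightarrow> (nat \<times> nat) set \<Rightarrow> nat set \<Rightarrow> nat set \<Rightarrow> (nat \<times> nat) set \<Rightarrow> bool" where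
  "has_induced R C G R' C' G' \<longleftrightarrow>
     (\<exists>R0 C0. R0 \<subseteq> R \<and> C0 \<subseteq> C \<and> bip_iso R0 C0 (G \<inter> (R0 \<times> C0)) R' C' G')"

text \<open>The graph with biadjacency matrix [[1,1,0],[1,1,1]]: rows {0,1}, columns {0,1,2}.\<close>

definition H_rows :: "nat set" where "H_rows = {0, 1}"
definition H_cols :: "nat set" where "H_cols = {0, 1, 2}"
definition H_edges :: "(nat \<times> nat) set" where
  "H_edges = {(0,0), (0,1), (1,0), (1,1), (1,2)}"

end

theory Submission
  imports Defs
begin

text \<open>The Schur norm is bounded below by \<open>\<bar>u\<^sup>T (M(G) \<circ> X) v\<bar>\<close> for any real matrix \<open>X\<close> with
  orthonormal columns supported on a finite induced subgraph and unit vectors \<open>u, v\<close>, because such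
  an \<open>X\<close> has operator norm at most \<open>1\<close>; over an arbitrary real normed field this needs Mazur's
  theorem that the field embeds isometrically into \<open>\<complex>\<close>. Explicit certificates show that the
  matrices \<open>T = [[1,1,0],[1,1,1],[0,1,0]]\<close>, \<open>[[1,1,0],[1,1,1],[1,0,1]]\<close> and
  \<open>[[1,1,1,1],[1,0,0,0],[0,1,0,0],[0,0,1,0]]\<close> all have Schur norm at least \<open>\<parallel>T\<parallel> = (9 + 4\<surd>6)/15\<close>,
  so none of them is induced in \<open>G\<close>.

  If \<open>G\<close> induced \<open>[[1,1,0],[1,1,1]]\<close> with columns \<open>x, y, z\<close>, a row separating the columns
  \<open>x\<close> and \<open>y\<close> (they are not twins) would complete it to the first or second matrix. If a
  vertex had four neighbours, then any row separating two of them and containing a third would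
  produce this forbidden pattern; hence three of the four neighbours have private rows, and these
  induce the third matrix.\<close>

section \<open>Real normed fields embed isometrically into the complex numbers\<close>

lemma nonreal_dist_Reals_pos:
  fixes \<xi> :: "'f::real_normed_field"
  assumes "\<xi> \<notin> \<real>"
  obtains d where "d > 0" "\<And>t. d \<le> norm (\<xi> - of_real t)"
proof -
  define M where "M = 2 * norm \<xi> + 1"
  have "continuous_on {-M..M} (\<lambda>t. norm (\<xi> - of_real t))"
    by (intro continuous_intros)
  then obtain t0 where "t0 \<in> {-M..M}"
    and t0_min: "\<And>t. t \<in> {-M..M} \<Longrightarrow> norm (\<xi> - of_real t0) \<le> norm (\<xi> - of_real t)"
    using continuous_attains_inf[of "{-M..M}" "\<lambda>t. norm (\<xi> - of_real t)"] unfolding M_def by force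
  have pos: "norm (\<xi> - of_real t0) > 0"
    using assms by (auto simp: Reals_def)
  have le_norm: "norm (\<xi> - of_real t0) \<le> norm \<xi>"
    using t0_min[of 0] norm_ge_zero[of \<xi>] unfolding M_def by simp
  have "norm (\<xi> - of_real t0) \<le> norm (\<xi> - of_real t)" for t
  proof (cases "t \<in> {-M..M}")
    case False
    have "norm (of_real t :: 'f) - norm \<xi> \<le> norm (\<xi> - of_real t)"
      by (metis norm_minus_commute norm_triangle_ineq2)
    with False le_norm show ?thesis unfolding M_def by auto
  qed (rule t0_min)
  with pos show thesis by (rule that)
qed

definition real_quad :: "'f::real_normed_field \<Rightarrow> real \<Rightarrow> real \<Rightarrow> 'f" where
  "real_quad x a b = x * x - of_real a * x + of_real b"

lemma norm_real_quad_ge_linear_coeff: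
  fixes \<xi> :: "'f::real_normed_field"
  assumes "\<And>t. d \<le> norm (\<xi> - of_real t)"
  shows "\<bar>a\<bar> * d - (norm \<xi>)^2 \<le> norm (real_quad \<xi> a b)"
proof (cases "a = 0")
  case False
  have "(of_real a :: 'f) * (\<xi> - of_real (b / a)) = of_real a * \<xi> - of_real (a * (b / a))"
    by (simp add: right_diff_distrib of_real_mult)
  then have "of_real a * \<xi> - of_real b = (of_real a :: 'f) * (\<xi> - of_real (b / a))"
    using False by simp
  then have "\<bar>a\<bar> * d \<le> norm (of_real a * \<xi> - of_real b :: 'f)"
    using assms[of "b / a"] by (simp add: norm_mult mult_left_mono)
  also have "\<dots> \<le> norm (real_quad \<xi> a b) + (norm \<xi>)^2"
    using norm_triangle_ineq4[of "\<xi> * \<xi>" "real_quad \<xi> a b"]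
    by (simp add: real_quad_def norm_mult power2_eq_square)
  finally show ?thesis
    by simp
next
  case True
  then have "\<bar>a\<bar> * d = 0"
    by simp
  then show ?thesis
    using norm_ge_zero[of "real_quad \<xi> a b"] zero_le_power2[of "norm \<xi>"] by linarith
qed

lemma norm_real_quad_ge_const_coeff:
  fixes \<xi> :: "'f::real_normed_field"
  shows "\<bar>b\<bar> - \<bar>a\<bar> * norm \<xi> - (norm \<xi>)^2 \<le> norm (real_quad \<xi> a b)"
proof -
  have "of_real b = real_quad \<xi> a b - \<xi> * \<xi> + of_real a * \<xi>"
    by (simp add: real_quad_def)
  also have "norm \<dots> \<le> norm (real_quad \<xi> a b - \<xi> * \<xi>) + norm (of_real a * \<xi>)"
    by (rule norm_triangle_ineq)
  also have "\<dots> \<le> norm (real_quad \<xi> a b) + norm (\<xi> * \<xi>) + norm (of_real a * \<xi>)"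
    using norm_triangle_ineq4 by simp
  finally show ?thesis
    by (simp add: norm_mult power2_eq_square)
qed

text \<open>By the two bounds above, outside a large box the norm exceeds \<open>norm \<xi>\<^sup>2\<close>, its value at
  \<open>(0, 0)\<close>; so the minimum over the compact box is global.\<close>

lemma real_quad_norm_attains_min:
  fixes \<xi> :: "'f::real_normed_field"
  assumes "\<xi> \<notin> \<real>"
  obtains a0 b0 where "\<And>a b. norm (real_quad \<xi> a0 b0) \<le> norm (real_quad \<xi> a b)"
proof -
  obtain d where d: "d > 0" "\<And>t. d \<le> norm (\<xi> - of_real t)"
    using nonreal_dist_Reals_pos[OF assms] by blast
  define n where "n = norm \<xi>"
  define K where "K = (2 * n^2 + 1) / d"
  define L where "L = 2 * n^2 + K * n + 1"
  define S where "S = {-K..K} \<times> {-L..L}"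
  have "K \<ge> 0"
    using d unfolding K_def by simp
  then have "L \<ge> 0"
    unfolding L_def n_def by (intro add_nonneg_nonneg mult_nonneg_nonneg) auto
  with \<open>K \<ge> 0\<close> have "(0, 0) \<in> S"
    unfolding S_def by simp
  moreover have "compact S"
    unfolding S_def by (intro compact_Times compact_Icc)
  moreover have "continuous_on S (\<lambda>p. norm (real_quad \<xi> (fst p) (snd p)))"
    unfolding real_quad_def by (intro continuous_intros)
  ultimately obtain p0 where p0_min: "\<forall>p\<in>S. norm (real_quad \<xi> (fst p0) (snd p0)) \<le> norm (real_quad \<xi> (fst p) (snd p))"
    using continuous_attains_inf by blast
  have at_p0: "norm (real_quad \<xi> (fst p0) (snd p0)) \<le> n^2"
    using p0_min[rule_format, OF \<open>(0, 0) \<in> S\<close>]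
    by (simp add: real_quad_def n_def norm_mult power2_eq_square)
  have outside: "n^2 < norm (real_quad \<xi> a b)" if "(a, b) \<notin> S" for a b
  proof (cases "\<bar>a\<bar> > K")
    case True
    then have "2 * n^2 + 1 < \<bar>a\<bar> * d"
      using d(1) unfolding K_def by (simp add: field_simps)
    then show ?thesis
      using norm_real_quad_ge_linear_coeff[OF d(2), of a b] unfolding n_def by linarith
  next
    case False
    then have "\<bar>b\<bar> > L" "\<bar>a\<bar> * n \<le> K * n"
      using that unfolding S_def n_def by (auto intro: mult_right_mono)
    then show ?thesis
      using norm_real_quad_ge_const_coeff[of b a \<xi>] unfolding L_def n_def by linarith
  qed
  show thesis
  proof (rule that)
    fix a b
    show "norm (real_quad \<xi> (fst p0) (snd p0)) \<le> norm (real_quad \<xi> a b)"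
      using p0_min outside[of a b] at_p0 by (cases "(a, b) \<in> S") (force, linarith)
  qed
qed

text \<open>The equations say \<open>(x\<^sup>2 - a1 x + b1)(x\<^sup>2 - a2 x + b2) = y\<^sup>2 + \<beta> y + \<gamma>\<close> for
  \<open>y = x\<^sup>2 - a x + b\<close>: a real quartic splits into real quadratics.\<close>

lemma real_quartic_factor:
  fixes a b \<beta> \<gamma> :: real
  obtains a1 a2 b1 b2 where "a1 + a2 = 2 * a" "b1 + b2 + a1 * a2 = a^2 + 2 * b + \<beta>"
    "a1 * b2 + a2 * b1 = 2 * a * b + \<beta> * a" "b1 * b2 = b^2 + \<beta> * b + \<gamma>"
proof -
  define P where "P = 2 * (b - a^2/4) + \<beta>"
  define Q where "Q = (b - a^2/4)^2 + \<beta> * (b - a^2/4) + \<gamma>"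
  show thesis
  proof (cases "P^2 \<ge> 4 * Q")
    case True
    define D where "D = sqrt (P^2 - 4 * Q)"
    have "D^2 = P^2 - 4 * Q"
      unfolding D_def using True by simp
    then have "(a^2/4 - (D - P)/2) + (a^2/4 + (D + P)/2) + a * a = a^2 + 2 * b + \<beta> \<and>
      a * (a^2/4 + (D + P)/2) + a * (a^2/4 - (D - P)/2) = 2 * a * b + \<beta> * a \<and>
      (a^2/4 - (D - P)/2) * (a^2/4 + (D + P)/2) = b^2 + \<beta> * b + \<gamma>"
      unfolding P_def Q_def by (auto simp: field_simps power2_eq_square)
    then show thesis
      by (auto intro!: that[of a a "a^2/4 - (D - P)/2" "a^2/4 + (D + P)/2"])
  next
    case False
    then have "Q > 0"
      using zero_le_power2[of P] by linarith
    define q where "q = sqrt Q"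
    have q2: "q^2 = Q" and "q > 0"
      unfolding q_def using \<open>Q > 0\<close> by auto
    have "P < 2 * q"
    proof (rule ccontr)
      assume "\<not> P < 2 * q"
      then have "(2 * q)^2 \<le> P^2"
        using \<open>q > 0\<close> by (intro power_mono) auto
      then show False
        using False q2 by (simp add: power_mult_distrib)
    qed
    define r where "r = sqrt (2 * q - P)"
    have "r^2 = 2 * q - P"
      unfolding r_def using \<open>P < 2 * q\<close> by simp
    then have "(a^2/4 + r*a/2 + q) + (a^2/4 - r*a/2 + q) + (a + r) * (a - r) = a^2 + 2 * b + \<beta> \<and>
      (a + r) * (a^2/4 - r*a/2 + q) + (a - r) * (a^2/4 + r*a/2 + q) = 2 * a * b + \<beta> * a \<and>
      (a^2/4 + r*a/2 + q) * (a^2/4 - r*a/2 + q) = b^2 + \<beta> * b + \<gamma>"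
      using q2 unfolding P_def Q_def by (auto simp: field_simps power2_eq_square; algebra)
    then show thesis
      by (auto intro!: that[of "a + r" "a - r" "a^2/4 + r*a/2 + q" "a^2/4 - r*a/2 + q"])
  qed
qed

lemma real_quad_square_factor:
  fixes x :: "'f::real_normed_field"
  assumes "a1 + a2 = 2 * a" "b1 + b2 + a1 * a2 = a^2 + 2 * b + \<beta>"
    "a1 * b2 + a2 * b1 = 2 * a * b + \<beta> * a" "b1 * b2 = b^2 + \<beta> * b + \<gamma>"
  shows "(real_quad x a b)^2 + of_real \<beta> * real_quad x a b + of_real \<gamma>
           = real_quad x a1 b1 * real_quad x a2 b2"
proof -
  have "real_quad x a1 b1 * real_quad x a2 b2 = x^4 - of_real (a1 + a2) * x^3
      + of_real (b1 + b2 + a1 * a2) * x^2 - of_real (a1 * b2 + a2 * b1) * x + of_real (b1 * b2)"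
    unfolding real_quad_def of_real_add of_real_mult
    by (simp add: algebra_simps power2_eq_square power3_eq_cube power4_eq_xxxx)
  also have "\<dots> = x^4 - of_real (2 * a) * x^3 + of_real (a^2 + 2 * b + \<beta>) * x^2
      - of_real (2 * a * b + \<beta> * a) * x + of_real (b^2 + \<beta> * b + \<gamma>)"
    using assms by simp
  also have "\<dots> = (real_quad x a b)^2 + of_real \<beta> * real_quad x a b + of_real \<gamma>"
    unfolding real_quad_def of_real_add of_real_mult of_real_power
    by (simp add: algebra_simps power2_eq_square power3_eq_cube power4_eq_xxxx)
  finally show ?thesis
    by simp
qed

lemma norm_real_quad_quadratic_ge:
  fixes \<xi> :: "'f::real_normed_field"
  assumes min: "\<And>a b. m \<le> norm (real_quad \<xi> a b)" and "m \<ge> 0"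
  shows "m^2 \<le> norm ((real_quad \<xi> a b)^2 + of_real \<beta> * real_quad \<xi> a b + of_real \<gamma>)"
proof -
  obtain a1 b1 a2 b2 where "a1 + a2 = 2 * a" "b1 + b2 + a1 * a2 = a^2 + 2 * b + \<beta>"
    "a1 * b2 + a2 * b1 = 2 * a * b + \<beta> * a" "b1 * b2 = b^2 + \<beta> * b + \<gamma>"
    by (rule real_quartic_factor)
  note factor = real_quad_square_factor[OF this, of \<xi>]
  have "m * m \<le> norm (real_quad \<xi> a1 b1) * norm (real_quad \<xi> a2 b2)"
    using min \<open>m \<ge> 0\<close> by (intro mult_mono) auto
  then show ?thesis
    unfolding factor by (simp add: norm_mult power2_eq_square)
qed

lemma quartic_sum_factor:
  fixes Z :: "'f::real_normed_field"
  assumes "\<sigma>^2 = 2 - s"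
  shows "Z^4 + of_real (s * c^2) * Z^2 + of_real (c^4) =
    (Z^2 + of_real (\<sigma> * c) * Z + of_real (c^2)) * (Z^2 + of_real (- \<sigma> * c) * Z + of_real (c^2))"
proof -
  have "(Z^2 + of_real (\<sigma> * c) * Z + of_real (c^2)) * (Z^2 + of_real (- \<sigma> * c) * Z + of_real (c^2))
     = Z^4 + of_real (2 * c^2 - \<sigma>^2 * c^2) * Z^2 + of_real (c^4)"
    unfolding of_real_mult of_real_diff of_real_power of_real_minus
    by (simp add: algebra_simps power2_eq_square power4_eq_xxxx)
  also have "2 * c^2 - \<sigma>^2 * c^2 = s * c^2"
    unfolding assms by (simp add: algebra_simps)
  finally show ?thesis
    by simp
qed

text \<open>Repeated use of the factorisation above writes the left-hand side as a product of
  \<open>2^(i+1)\<close> values of \<open>real_quad\<close> at the same point.\<close>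

lemma norm_real_quad_pow2_ge:
  fixes \<xi> :: "'f::real_normed_field"
  assumes min: "\<And>a b. m \<le> norm (real_quad \<xi> a b)" and "m \<ge> 0" and "\<bar>s\<bar> \<le> 2"
  shows "m^(2^(i+1)) \<le> norm ((real_quad \<xi> a b)^(2^(i+1))
           + of_real (s * e^(2^i)) * (real_quad \<xi> a b)^(2^i) + of_real (e^(2^(i+1))))"
  using \<open>\<bar>s\<bar> \<le> 2\<close>
proof (induction i arbitrary: s)
  case 0
  show ?case
    using norm_real_quad_quadratic_ge[OF min \<open>m \<ge> 0\<close>, of a b "s * e" "e^2"] by simp
next
  case (Suc i)
  define \<sigma> where "\<sigma> = sqrt (2 - s)"
  have "\<sigma> \<le> sqrt 4"
    unfolding \<sigma>_def using Suc.prems by (intro real_sqrt_le_mono) simp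
  moreover have "\<sigma>^2 = 2 - s" "0 \<le> \<sigma>"
    unfolding \<sigma>_def using Suc.prems by auto
  ultimately have \<sigma>: "\<sigma>^2 = 2 - s" "\<bar>\<sigma>\<bar> \<le> 2" "\<bar>-\<sigma>\<bar> \<le> 2"
    by auto
  define Z where "Z = (real_quad \<xi> a b)^(2^i)"
  define c where "c = e^(2^i)"
  have pow: "(real_quad \<xi> a b)^(2^(Suc i + 1)) = Z^4" "(real_quad \<xi> a b)^(2^(Suc i)) = Z^2"
    "(real_quad \<xi> a b)^(2^(i + 1)) = Z^2" "e^(2^(Suc i + 1)) = c^4" "e^(2^(Suc i)) = c^2"
    "e^(2^(i + 1)) = c^2"
    unfolding Z_def c_def by (simp_all add: power_mult[symmetric] mult.commute)
  have "m^(2^(Suc i + 1)) = m^(2^(i+1)) * m^(2^(i+1))"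
    by (simp add: power_add[symmetric])
  also have "\<dots> \<le> norm (Z^2 + of_real (\<sigma> * c) * Z + of_real (c^2))
                 * norm (Z^2 + of_real (- \<sigma> * c) * Z + of_real (c^2))"
    using Suc.IH[OF \<sigma>(2)] Suc.IH[OF \<sigma>(3)] \<open>m \<ge> 0\<close>
    unfolding pow Z_def[symmetric] c_def[symmetric] by (intro mult_mono) auto
  also have "\<dots> = norm (Z^4 + of_real (s * c^2) * Z^2 + of_real (c^4))"
    unfolding quartic_sum_factor[OF \<sigma>(1)] norm_mult ..
  finally show ?case
    unfolding pow .
qed

lemma norm_pow2_diff_ge:
  fixes y :: "'f::real_normed_field"
  assumes sum_ge: "\<And>i. m^(2^(i+1)) \<le> norm (y^(2^(i+1)) + of_real (e^(2^(i+1))))" and "m \<ge> 0"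
  shows "norm (y + of_real e) * norm (y - of_real e) * m^(2^(j+1) - 2)
           \<le> norm (y^(2^(j+1)) - of_real (e^(2^(j+1))))"
proof (induction j)
  case 0
  have "y^2 - of_real (e^2) = (y + of_real e) * (y - of_real e)"
    by (simp add: algebra_simps power2_eq_square)
  then show ?case
    by (simp add: norm_mult)
next
  case (Suc j)
  define Y where "Y = y^(2^(j+1))"
  define E where "E = e^(2^(j+1))"
  have pow: "y^(2^(Suc j+1)) = Y^2" "e^(2^(Suc j+1)) = E^2"
    unfolding Y_def E_def by (simp_all add: power_mult[symmetric] mult.commute)
  have "(2::nat) \<le> 2^(j+1)"
    by (simp add: self_le_power)
  then have "2^(Suc j+1) - 2 = (2^(j+1) - 2) + (2::nat)^(j+1)"
    by simp
  then have "m^(2^(Suc j+1) - 2) = m^(2^(j+1) - 2) * m^(2^(j+1))"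
    by (simp only: power_add)
  then have "norm (y + of_real e) * norm (y - of_real e) * m^(2^(Suc j+1) - 2)
      = (norm (y + of_real e) * norm (y - of_real e) * m^(2^(j+1) - 2)) * m^(2^(j+1))"
    by (simp only: mult.assoc)
  also have "\<dots> \<le> norm (Y - of_real E) * norm (Y + of_real E)"
    using Suc.IH sum_ge[of j] \<open>m \<ge> 0\<close> unfolding Y_def E_def by (intro mult_mono) auto
  also have "\<dots> = norm (Y^2 - of_real (E^2))"
    by (simp add: algebra_simps power2_eq_square flip: norm_mult)
  finally show ?case
    unfolding pow .
qed

text \<open>The heart of the argument: at a minimiser, with \<open>y = real_quad \<xi> a b\<close>, \<open>e = m/2\<close> and
  \<open>N = 2^(n+1)\<close>, the value \<open>norm (y^N - e^N)\<close> is at most \<open>m^N + e^N\<close>, and at least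
  \<open>norm (y + e) * norm (y - e) * m^(N-2)\<close> by the two lemmas above.\<close>

lemma real_quad_shift_norm_le:
  fixes \<xi> :: "'f::real_normed_field"
  assumes min: "\<And>a b. m \<le> norm (real_quad \<xi> a b)" and "m > 0"
    and at_min: "norm (real_quad \<xi> a b) = m"
  shows "norm (real_quad \<xi> a (b + m/2)) \<le> m + m * (1/2)^(2^(n+1))"
proof -
  define e where "e = m / 2"
  define y where "y = real_quad \<xi> a b"
  define N where "N = (2::nat)^(n+1)"
  have "2 \<le> N"
    unfolding N_def by (simp add: self_le_power)
  then obtain k where N: "N = Suc (Suc k)"
    by (metis add_2_eq_Suc le_Suc_ex)
  have "real_quad \<xi> a (b - e) = y - of_real e"
    unfolding y_def real_quad_def by simp
  then have "m \<le> norm (y - of_real e)"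
    using min by metis
  have sum_ge: "m^(2^(i+1)) \<le> norm (y^(2^(i+1)) + of_real (e^(2^(i+1))))" for i
    using norm_real_quad_pow2_ge[OF min _, of 0] \<open>m > 0\<close> unfolding y_def by simp
  have "norm (y + of_real e) * m^(N-1) = norm (y + of_real e) * m * m^(N-2)"
    unfolding N by (simp add: algebra_simps)
  also have "\<dots> \<le> norm (y + of_real e) * norm (y - of_real e) * m^(N-2)"
    using \<open>m \<le> norm (y - of_real e)\<close> \<open>m > 0\<close> by (intro mult_right_mono mult_left_mono) auto
  also have "\<dots> \<le> norm (y^N - of_real (e^N))"
    using norm_pow2_diff_ge[OF sum_ge, of n] \<open>m > 0\<close> unfolding N_def by simp
  also have "\<dots> \<le> norm (y^N) + norm (of_real (e^N) :: 'f)"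
    by (rule norm_triangle_ineq4)
  also have "\<dots> = m^N + m^N * (1/2)^N"
  proof -
    have "norm (of_real (e^N) :: 'f) = m^N * (1/2)^N"
      using \<open>m > 0\<close> unfolding norm_of_real e_def by (simp add: power_divide)
    then show ?thesis
      using at_min unfolding y_def by (simp add: norm_power)
  qed
  also have "\<dots> = (m + m * (1/2)^N) * m^(N-1)"
    unfolding N by (simp add: algebra_simps)
  finally have "norm (y + of_real e) \<le> m + m * (1/2)^N"
    using \<open>m > 0\<close> by simp
  moreover have "real_quad \<xi> a (b + m/2) = y + of_real e"
    unfolding y_def e_def real_quad_def by simp
  ultimately show ?thesis
    unfolding N_def by simp
qed

lemma real_quad_min_shift:
  fixes \<xi> :: "'f::real_normed_field"
  assumes min: "\<And>a b. m \<le> norm (real_quad \<xi> a b)" and "m > 0"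
    and at_min: "norm (real_quad \<xi> a b) = m"
  shows "norm (real_quad \<xi> a (b + m/2)) \<le> m"
proof (rule ccontr)
  assume "\<not> ?thesis"
  then obtain n where n: "m * (1/2)^n < norm (real_quad \<xi> a (b + m/2)) - m"
    using real_arch_pow_inv[of "(norm (real_quad \<xi> a (b + m/2)) - m) / m" "1/2"] \<open>m > 0\<close>
    by (auto simp: field_simps)
  have "n \<le> 2^(n+1)"
    using less_exp[of n] power_increasing[of n "n+1" "2::nat"] by linarith
  then have "m * (1/2)^(2^(n+1)) \<le> m * (1/2)^n"
    using \<open>m > 0\<close> by (intro mult_left_mono power_decreasing) auto
  with n real_quad_shift_norm_le[OF min \<open>m > 0\<close> at_min, of n] show False
    by simp
qed

text \<open>If the minimum \<open>m\<close> were positive, shifting \<open>b\<close> by \<open>m/2\<close> would keep it attained; five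
  shifts change the value by \<open>5m/2 > 2m\<close>, which is absurd.\<close>

lemma nonreal_real_quad_root:
  fixes \<xi> :: "'f::real_normed_field"
  assumes "\<xi> \<notin> \<real>"
  obtains a b where "real_quad \<xi> a b = 0"
proof -
  obtain a0 b0 where min0: "\<And>a b. norm (real_quad \<xi> a0 b0) \<le> norm (real_quad \<xi> a b)"
    using real_quad_norm_attains_min[OF assms] by blast
  define m where "m = norm (real_quad \<xi> a0 b0)"
  have min: "\<And>a b. m \<le> norm (real_quad \<xi> a b)"
    unfolding m_def by (rule min0)
  show thesis
  proof (cases "m = 0")
    case True
    then show thesis
      using that unfolding m_def by simp
  next
    case False
    then have "m > 0"
      unfolding m_def by simp
    have shifted: "norm (real_quad \<xi> a0 (b0 + real k * (m/2))) = m" for k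
    proof (induction k)
      case (Suc k)
      have "norm (real_quad \<xi> a0 (b0 + real k * (m/2) + m/2)) \<le> m"
        by (rule real_quad_min_shift[OF min \<open>m > 0\<close> Suc.IH])
      moreover have "b0 + real k * (m/2) + m/2 = b0 + real (Suc k) * (m/2)"
        by (simp add: algebra_simps)
      ultimately show ?case
        using min by (metis antisym)
    qed (simp add: m_def)
    have "real_quad \<xi> a0 (b0 + real 5 * (m/2)) = real_quad \<xi> a0 b0 + of_real (5 * m / 2)"
      unfolding real_quad_def by simp
    then have "norm (of_real (5 * m / 2) :: 'f)
        \<le> norm (real_quad \<xi> a0 (b0 + real 5 * (m/2))) + norm (real_quad \<xi> a0 b0)"
      by (metis add_diff_cancel_left' norm_triangle_ineq4 add.commute)
    then show thesis
      using shifted[of 5] \<open>m > 0\<close> unfolding m_def by simp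
  qed
qed

lemma real_quad_root_Reals:
  fixes \<xi> :: "'f::real_normed_field"
  assumes root: "real_quad \<xi> a b = 0" and "4 * b \<le> a^2"
  shows "\<xi> \<in> \<real>"
proof -
  define D where "D = sqrt (a^2 - 4 * b)"
  define r1 where "r1 = (a + D) / 2"
  define r2 where "r2 = (a - D) / 2"
  have "D^2 = a^2 - 4 * b"
    unfolding D_def using assms(2) by simp
  then have "r1 + r2 = a" "r1 * r2 = b"
    unfolding r1_def r2_def by (simp_all add: field_simps power2_eq_square)
  moreover have "(\<xi> - of_real r1) * (\<xi> - of_real r2) = \<xi> * \<xi> - of_real (r1 + r2) * \<xi> + of_real (r1 * r2)"
    by (simp add: algebra_simps)
  ultimately have "(\<xi> - of_real r1) * (\<xi> - of_real r2) = 0"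
    using root unfolding real_quad_def by simp
  then show ?thesis
    by auto
qed

lemma real_quad_root_imaginary_unit:
  fixes \<xi> :: "'f::real_normed_field"
  assumes root: "real_quad \<xi> a b = 0" and "a^2 < 4 * b"
  obtains k w where "w * w = -1" "\<xi> = of_real (a / 2) + of_real k * w"
proof -
  define k where "k = sqrt (b - a^2 / 4)"
  have "k > 0" "k * k = b - a^2 / 4"
    unfolding k_def using assms(2) by auto
  define w where "w = (\<xi> - of_real (a / 2)) / of_real k"
  have \<xi>: "\<xi> = of_real (a / 2) + of_real k * w"
    unfolding w_def using \<open>k > 0\<close> by simp
  have "of_real (k * k) * (w * w) = (\<xi> - of_real (a / 2)) * (\<xi> - of_real (a / 2))"
    unfolding \<xi> by (simp add: algebra_simps)
  also have "\<dots> = real_quad \<xi> a b + of_real (a^2 / 4 - b)"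
    unfolding real_quad_def by (simp add: algebra_simps power2_eq_square flip: of_real_mult)
  also have "\<dots> = of_real (k * k) * (-1)"
    using root \<open>k * k = b - a^2 / 4\<close> by simp
  finally have "of_real (k * k) * (w * w) = of_real (k * k) * (-1 :: 'f)" .
  moreover have "(of_real (k * k) :: 'f) \<noteq> 0"
    using \<open>k > 0\<close> by simp
  ultimately have "w * w = -1"
    using mult_left_cancel by blast
  then show thesis
    using \<xi> by (rule that)
qed

lemma nonreal_imaginary_unit:
  fixes \<xi> :: "'f::real_normed_field"
  assumes "\<xi> \<notin> \<real>"
  obtains c k w where "w * w = -1" "\<xi> = of_real c + of_real k * w"
proof -
  obtain a b where root: "real_quad \<xi> a b = 0"
    using nonreal_real_quad_root[OF assms] .
  with assms have "a^2 < 4 * b"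
    using real_quad_root_Reals[of \<xi> a b] by linarith
  with root show thesis
    by (metis real_quad_root_imaginary_unit that)
qed

locale imaginary_unit =
  fixes w :: "'f::real_normed_field"
  assumes square: "w * w = -1"
begin

lemma not_Reals: "w \<notin> \<real>"
proof
  assume "w \<in> \<real>"
  then obtain r where "w = of_real r"
    by (auto elim: Reals_cases)
  then have "of_real (r * r) = (of_real (-1) :: 'f)"
    using square by simp
  then have "r * r = -1"
    by (simp only: of_real_eq_iff)
  then show False
    using zero_le_square[of r] by linarith
qed

lemma coordinates:
  obtains p q where "z = of_real p + of_real q * w"
proof (cases "z \<in> \<real>")
  case True
  then show thesis
    by (auto elim!: Reals_cases intro: that[of _ 0])
next
  case False
  then obtain c k w' where w': "w' * w' = -1" "z = of_real c + of_real k * w'"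
    by (rule nonreal_imaginary_unit)
  have "(w' - w) * (w' + w) = 0"
    using square w'(1) by (simp add: algebra_simps)
  then have "w' = w \<or> w' = - w"
    by (auto simp: eq_neg_iff_add_eq_0)
  then show thesis
  proof
    assume "w' = - w"
    then have "z = of_real c + of_real (- k) * w"
      using w'(2) by simp
    then show thesis
      by (rule that)
  qed (use w' that in blast)
qed

lemma coordinates_unique:
  assumes "of_real p + of_real q * w = of_real p' + of_real q' * w"
  shows "p = p' \<and> q = q'"
proof (cases "q = q'")
  case False
  have "of_real (q - q') * w = (of_real (p' - p) :: 'f)"
    using assms by (simp add: algebra_simps)
  then have "w = of_real ((p' - p) / (q - q'))"
    using False by (simp add: field_simps)
  with not_Reals show ?thesis
    by simp
qed (use assms in simp)

lemma norm_eq_1: "norm w = 1"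
proof -
  have "norm w * norm w = 1"
    using square by (simp flip: norm_mult)
  then have "(norm w - 1) * (norm w + 1) = 0"
    by (simp add: algebra_simps)
  moreover have "norm w + 1 \<noteq> 0"
    using norm_ge_zero[of w] by linarith
  ultimately show ?thesis
    by simp
qed

lemma mult_coordinates:
  "(of_real p + of_real q * w) * (of_real p' + of_real q' * w)
     = of_real (p * p' - q * q') + of_real (p * q' + q * p') * w"
proof -
  have "(of_real p + of_real q * w) * (of_real p' + of_real q' * w)
      = of_real (p * p') + of_real (p * q' + q * p') * w + of_real (q * q') * (w * w)"
    by (simp add: algebra_simps)
  then show ?thesis
    using square by (simp add: algebra_simps)
qed

lemma unit_circle_power:
  assumes "p^2 + q^2 = 1"
  shows "\<exists>p' q'. (of_real p + of_real q * w)^n = of_real p' + of_real q' * w \<and> p'^2 + q'^2 = 1"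
proof (induction n)
  case 0
  show ?case
    by (intro exI[of _ 1] exI[of _ 0]) simp
next
  case (Suc n)
  then obtain p' q' where IH: "(of_real p + of_real q * w)^n = of_real p' + of_real q' * w" "p'^2 + q'^2 = 1"
    by blast
  have "(of_real p + of_real q * w)^Suc n = (of_real p + of_real q * w) * (of_real p' + of_real q' * w)"
    using IH(1) by simp
  also have "\<dots> = of_real (p * p' - q * q') + of_real (p * q' + q * p') * w"
    by (rule mult_coordinates)
  finally have power: "(of_real p + of_real q * w)^Suc n = of_real (p * p' - q * q') + of_real (p * q' + q * p') * w" .
  have "(p * p' - q * q')^2 + (p * q' + q * p')^2 = (p^2 + q^2) * (p'^2 + q'^2)"
    by (simp add: algebra_simps power2_eq_square)
  then have "(p * p' - q * q')^2 + (p * q' + q * p')^2 = 1"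
    using assms IH(2) by simp
  with power show ?case
    by blast
qed

text \<open>Powers of a unit-circle element stay bounded by \<open>2\<close>, which rules out norm \<open>> 1\<close>;
  the same bound for the conjugate, whose product with it is \<open>1\<close>, rules out norm \<open>< 1\<close>.\<close>

lemma norm_unit_circle_le:
  assumes "p^2 + q^2 = 1"
  shows "norm (of_real p + of_real q * w) \<le> 1"
proof (rule ccontr)
  let ?z = "of_real p + of_real q * w"
  assume "\<not> ?thesis"
  then obtain n where n: "2 < norm ?z ^ n"
    using real_arch_pow[of "norm ?z" 2] by auto
  obtain p' q' where pq': "?z^n = of_real p' + of_real q' * w" "p'^2 + q'^2 = 1"
    using unit_circle_power[OF assms] by blast
  then have "p'^2 \<le> 1" "q'^2 \<le> 1"
    using zero_le_power2[of p'] zero_le_power2[of q'] by linarith+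
  then have "\<bar>p'\<bar> \<le> 1" "\<bar>q'\<bar> \<le> 1"
    by (simp_all add: abs_square_le_1)
  then have "norm (of_real p' + of_real q' * w) \<le> 2"
    using norm_triangle_ineq[of "of_real p' :: 'f" "of_real q' * w"] norm_eq_1
    by (simp add: norm_mult)
  with n pq'(1) show False
    by (simp add: norm_power[symmetric])
qed

lemma norm_unit_circle:
  assumes "p^2 + q^2 = 1"
  shows "norm (of_real p + of_real q * w) = 1"
proof -
  have le: "norm (of_real p + of_real q * w) \<le> 1" "norm (of_real p + of_real (- q) * w) \<le> 1"
    using assms norm_unit_circle_le[of p q] norm_unit_circle_le[of p "- q"] by simp_all
  have "(of_real p + of_real q * w) * (of_real p + of_real (- q) * w)
      = of_real (p^2 + q^2) - of_real (q * q) * (w * w + 1)"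
    by (simp add: algebra_simps power2_eq_square)
  then have "norm (of_real p + of_real q * w) * norm (of_real p + of_real (- q) * w) = 1"
    using assms square by (simp flip: norm_mult)
  moreover have "norm (of_real p + of_real q * w) * norm (of_real p + of_real (- q) * w)
      \<le> norm (of_real p + of_real q * w)"
    using le(2) by (simp add: mult_left_le)
  ultimately show ?thesis
    using le(1) by linarith
qed

lemma norm_coordinates: "norm (of_real p + of_real q * w) = sqrt (p^2 + q^2)"
proof (cases "p^2 + q^2 = 0")
  case True
  then show ?thesis
    by (simp add: add_nonneg_eq_0_iff)
next
  case False
  define \<rho> where "\<rho> = sqrt (p^2 + q^2)"
  have "p^2 + q^2 > 0"
    using False zero_le_power2[of p] zero_le_power2[of q] by linarith
  then have "\<rho> > 0"
    unfolding \<rho>_def by simp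
  have "(p / \<rho>)^2 + (q / \<rho>)^2 = 1"
    using \<open>\<rho> > 0\<close> False unfolding \<rho>_def by (simp add: power_divide add_divide_distrib[symmetric])
  then have unit: "norm (of_real (p / \<rho>) + of_real (q / \<rho>) * w) = 1"
    by (rule norm_unit_circle)
  have "of_real p + of_real q * w = of_real \<rho> * (of_real (p / \<rho>) + of_real (q / \<rho>) * w)"
  proof -
    have "\<rho> * (p / \<rho>) = p" "\<rho> * (q / \<rho>) = q"
      using \<open>\<rho> > 0\<close> by auto
    moreover have "of_real \<rho> * (of_real (p / \<rho>) + of_real (q / \<rho>) * w)
        = of_real (\<rho> * (p / \<rho>)) + of_real (\<rho> * (q / \<rho>)) * w"
      by (simp only: distrib_left of_real_mult mult.assoc)
    ultimately show ?thesis
      by simp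
  qed
  then have "norm (of_real p + of_real q * w) = \<rho>"
    using \<open>\<rho> > 0\<close> by (simp only: norm_mult unit norm_of_real)
  then show ?thesis
    unfolding \<rho>_def .
qed

end

definition isometric_complex_embedding :: "('f::real_normed_field \<Rightarrow> complex) \<Rightarrow> bool" where
  "isometric_complex_embedding \<phi> \<longleftrightarrow> (\<forall>x y. \<phi> (x + y) = \<phi> x + \<phi> y) \<and> (\<forall>x y. \<phi> (x * y) = \<phi> x * \<phi> y) \<and>
     (\<forall>r. \<phi> (of_real r) = of_real r) \<and> (\<forall>x. norm (\<phi> x) = norm x)"

lemma (in imaginary_unit) isometric_complex_embedding_exists:
  "\<exists>\<phi>. isometric_complex_embedding (\<phi> :: 'f \<Rightarrow> complex)"
proof -
  define coords where "coords z = (SOME pq. z = of_real (fst pq) + of_real (snd pq) * w)" for z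
  have coords: "z = of_real (fst (coords z)) + of_real (snd (coords z)) * w" for z
  proof -
    obtain p q where "z = of_real p + of_real q * w"
      by (rule coordinates)
    then have "\<exists>pq. z = of_real (fst pq) + of_real (snd pq) * w"
      by (intro exI[of _ "(p, q)"]) simp
    then show ?thesis
      unfolding coords_def by (rule someI_ex)
  qed
  have coords_eq: "coords z = (p, q)" if "z = of_real p + of_real q * w" for z p q
    using coordinates_unique[of "fst (coords z)" "snd (coords z)" p q] coords[of z] that
    by (simp add: prod_eq_iff)
  define \<phi> where "\<phi> z = Complex (fst (coords z)) (snd (coords z))" for z
  have \<phi>: "\<phi> (of_real p + of_real q * w) = Complex p q" for p q
    unfolding \<phi>_def coords_eq[OF refl] by simp
  have "\<phi> (x + y) = \<phi> x + \<phi> y" "\<phi> (x * y) = \<phi> x * \<phi> y" "norm (\<phi> x) = norm x" for x y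
  proof -
    obtain p q p' q' where xy: "x = of_real p + of_real q * w" "y = of_real p' + of_real q' * w"
      by (metis coordinates)
    have "x + y = of_real (p + p') + of_real (q + q') * w"
      unfolding xy by (simp add: algebra_simps)
    then have "\<phi> (x + y) = Complex (p + p') (q + q')"
      by (simp only: \<phi>)
    then show "\<phi> (x + y) = \<phi> x + \<phi> y"
      unfolding xy by (simp add: \<phi> complex_eq_iff)
    have "\<phi> (x * y) = Complex (p * p' - q * q') (p * q' + q * p')"
      unfolding xy mult_coordinates by (rule \<phi>)
    then show "\<phi> (x * y) = \<phi> x * \<phi> y"
      unfolding xy by (simp add: \<phi> complex_eq_iff)
    show "norm (\<phi> x) = norm x"
      unfolding xy by (simp add: \<phi> norm_coordinates complex_norm)
  qed
  moreover have "\<phi> (of_real r) = of_real r" for r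
    using \<phi>[of r 0] by (simp add: complex_of_real_def)
  ultimately show ?thesis
    unfolding isometric_complex_embedding_def by blast
qed

lemma Reals_isometric_complex_embedding_exists:
  assumes "\<And>z :: 'f::real_normed_field. z \<in> \<real>"
  shows "\<exists>\<phi>. isometric_complex_embedding (\<phi> :: 'f \<Rightarrow> complex)"
proof -
  define re where "re z = (THE r. z = of_real r)" for z :: 'f
  have re: "re (of_real s) = s" for s
    unfolding re_def by auto
  have "isometric_complex_embedding (\<lambda>z. of_real (re z))"
    unfolding isometric_complex_embedding_def
  proof (intro conjI allI)
    fix x y :: 'f
    obtain s t where "x = of_real s" "y = of_real t"
      using assms by (metis Reals_cases)
    then show "complex_of_real (re (x + y)) = of_real (re x) + of_real (re y)"
      and "complex_of_real (re (x * y)) = of_real (re x) * of_real (re y)"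
      and "norm (complex_of_real (re x)) = norm x"
      by (simp_all add: re flip: of_real_add of_real_mult)
  qed (simp add: re)
  then show ?thesis
    by blast
qed

theorem real_normed_field_isometric_complex_embedding:
  "\<exists>\<phi>. isometric_complex_embedding (\<phi> :: 'f::real_normed_field \<Rightarrow> complex)"
proof (cases "\<exists>w::'f. w * w = -1")
  case True
  then obtain w :: 'f where "w * w = -1"
    by blast
  then interpret imaginary_unit w
    by unfold_locales
  show ?thesis
    by (rule isometric_complex_embedding_exists)
next
  case False
  have "z \<in> \<real>" for z :: 'f
    using False nonreal_imaginary_unit by metis
  then show ?thesis
    by (rule Reals_isometric_complex_embedding_exists)
qed

section \<open>Lower bounds for the Schur norm\<close>

definition orthonormal_columns :: "nat set \<Rightarrow> nat set \<Rightarrow> (nat \<Rightarrow> nat \<Rightarrow> real) \<Rightarrow> bool" where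
  "orthonormal_columns I J X \<longleftrightarrow> (\<forall>j\<in>J. \<forall>k\<in>J. (\<Sum>i\<in>I. X i j * X i k) = (if j = k then 1 else 0))"

lemma sum_squares_orthonormal_columns:
  fixes X :: "nat \<Rightarrow> nat \<Rightarrow> real" and x :: "nat \<Rightarrow> real"
  assumes "orthonormal_columns I J X" and "J' \<subseteq> J"
  shows "(\<Sum>i\<in>I. (\<Sum>j\<in>J'. X i j * x j)^2) = (\<Sum>j\<in>J'. (x j)^2)"
proof -
  have "(\<Sum>i\<in>I. (\<Sum>j\<in>J'. X i j * x j)^2) = (\<Sum>i\<in>I. \<Sum>j\<in>J'. \<Sum>k\<in>J'. (X i j * X i k) * (x j * x k))"
    by (simp add: power2_eq_square sum_product algebra_simps)
  also have "\<dots> = (\<Sum>j\<in>J'. \<Sum>k\<in>J'. \<Sum>i\<in>I. (X i j * X i k) * (x j * x k))"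
    by (simp only: sum.swap[of _ I] sum.swap[of _ I J'])
  also have "\<dots> = (\<Sum>j\<in>J'. \<Sum>k\<in>J'. (\<Sum>i\<in>I. X i j * X i k) * (x j * x k))"
    by (simp add: sum_distrib_right)
  also have "\<dots> = (\<Sum>j\<in>J'. \<Sum>k\<in>J'. if j = k then x j * x k else 0)"
  proof (intro sum.cong refl)
    fix j k assume "j \<in> J'" "k \<in> J'"
    with assms have "(\<Sum>i\<in>I. X i j * X i k) = (if j = k then 1 else 0)"
      unfolding orthonormal_columns_def by blast
    then show "(\<Sum>i\<in>I. X i j * X i k) * (x j * x k) = (if j = k then x j * x k else 0)"
      by simp
  qed
  also have "\<dots> = (\<Sum>j\<in>J'. (x j)^2)"
    by (cases "finite J'") (simp_all add: power2_eq_square)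
  finally show ?thesis .
qed

lemma cmod_bilinear_orthonormal_le:
  fixes X :: "nat \<Rightarrow> nat \<Rightarrow> real" and a b :: "nat \<Rightarrow> complex"
  assumes "finite I" "finite F1" "finite F2"
    and support: "\<And>i j. X i j \<noteq> 0 \<Longrightarrow> i \<in> I \<and> j \<in> J"
    and "orthonormal_columns I J X"
  shows "(cmod (\<Sum>i\<in>F1. \<Sum>j\<in>F2. a i * of_real (X i j) * b j))^2
           \<le> (\<Sum>i\<in>F1. (cmod (a i))^2) * (\<Sum>j\<in>F2. (cmod (b j))^2)"
proof -
  define J' where "J' = F2 \<inter> J"
  define c where "c i = (\<Sum>j\<in>J'. of_real (X i j) * b j)" for i
  have "(\<Sum>j\<in>F2. a i * of_real (X i j) * b j) = a i * c i" for i
  proof -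
    have "(\<Sum>j\<in>F2. a i * of_real (X i j) * b j) = (\<Sum>j\<in>J'. a i * of_real (X i j) * b j)"
      unfolding J'_def using \<open>finite F2\<close> support by (intro sum.mono_neutral_right) auto
    then show ?thesis
      unfolding c_def by (simp add: sum_distrib_left mult.assoc)
  qed
  then have "(cmod (\<Sum>i\<in>F1. \<Sum>j\<in>F2. a i * of_real (X i j) * b j))^2 = (cmod (\<Sum>i\<in>F1. a i * c i))^2"
    by simp
  also have "\<dots> \<le> (\<Sum>i\<in>F1. cmod (a i) * cmod (c i))^2"
    using norm_sum[of "\<lambda>i. a i * c i" F1] by (intro power_mono) (auto simp: norm_mult)
  also have "\<dots> \<le> (\<Sum>i\<in>F1. (cmod (a i))^2) * (\<Sum>i\<in>F1. (cmod (c i))^2)"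
    by (rule Cauchy_Schwarz_ineq_sum)
  also have "(\<Sum>i\<in>F1. (cmod (c i))^2) \<le> (\<Sum>j\<in>F2. (cmod (b j))^2)"
  proof -
    have "c i = 0" if "i \<notin> I" for i
      unfolding c_def using support that by (intro sum.neutral) auto
    then have "(\<Sum>i\<in>F1. (cmod (c i))^2) = (\<Sum>i\<in>F1 \<inter> I. (cmod (c i))^2)"
      using \<open>finite F1\<close> by (intro sum.mono_neutral_right) auto
    also have "\<dots> \<le> (\<Sum>i\<in>I. (cmod (c i))^2)"
      using \<open>finite I\<close> by (intro sum_mono2) auto
    also have "\<dots> = (\<Sum>i\<in>I. (\<Sum>j\<in>J'. X i j * Re (b j))^2) + (\<Sum>i\<in>I. (\<Sum>j\<in>J'. X i j * Im (b j))^2)"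
      unfolding c_def cmod_power2 by (simp add: Re_sum Im_sum sum.distrib)
    also have "\<dots> = (\<Sum>j\<in>J'. (cmod (b j))^2)"
      using sum_squares_orthonormal_columns[OF \<open>orthonormal_columns I J X\<close>, of J']
      unfolding J'_def by (simp add: cmod_power2 sum.distrib)
    also have "\<dots> \<le> (\<Sum>j\<in>F2. (cmod (b j))^2)"
      unfolding J'_def using \<open>finite F2\<close> by (intro sum_mono2) auto
    finally show ?thesis .
  qed
  then have "(\<Sum>i\<in>F1. (cmod (a i))^2) * (\<Sum>i\<in>F1. (cmod (c i))^2)
      \<le> (\<Sum>i\<in>F1. (cmod (a i))^2) * (\<Sum>j\<in>F2. (cmod (b j))^2)"
    by (intro mult_left_mono) (auto intro: sum_nonneg)
  finally show ?thesis .
qed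

lemma norm_bilinear_orthonormal_le_1:
  fixes X :: "nat \<Rightarrow> nat \<Rightarrow> real" and u v :: "nat \<Rightarrow> 'f::real_normed_field"
  assumes "finite I" "finite F1" "finite F2"
    and support: "\<And>i j. X i j \<noteq> 0 \<Longrightarrow> i \<in> I \<and> j \<in> J"
    and "orthonormal_columns I J X"
    and "(\<Sum>i\<in>F1. (norm (u i))^2) \<le> 1" "(\<Sum>j\<in>F2. (norm (v j))^2) \<le> 1"
  shows "norm (\<Sum>i\<in>F1. \<Sum>j\<in>F2. u i * of_real (X i j) * v j) \<le> 1"
proof -
  obtain \<phi> :: "'f \<Rightarrow> complex" where "isometric_complex_embedding \<phi>"
    using real_normed_field_isometric_complex_embedding by blast
  then have add: "\<And>x y. \<phi> (x + y) = \<phi> x + \<phi> y" and mult: "\<And>x y. \<phi> (x * y) = \<phi> x * \<phi> y"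
    and of_real: "\<And>r. \<phi> (of_real r) = of_real r" and norm: "\<And>x. norm (\<phi> x) = norm x"
    unfolding isometric_complex_embedding_def by blast+
  interpret \<phi>: Modules.additive \<phi>
    by unfold_locales (rule add)
  have "norm (\<Sum>i\<in>F1. \<Sum>j\<in>F2. u i * of_real (X i j) * v j)
      = cmod (\<Sum>i\<in>F1. \<Sum>j\<in>F2. \<phi> (u i) * of_real (X i j) * \<phi> (v j))"
    by (simp flip: norm add: \<phi>.sum mult of_real)
  moreover have "(cmod (\<Sum>i\<in>F1. \<Sum>j\<in>F2. \<phi> (u i) * of_real (X i j) * \<phi> (v j)))^2
      \<le> (\<Sum>i\<in>F1. (cmod (\<phi> (u i)))^2) * (\<Sum>j\<in>F2. (cmod (\<phi> (v j)))^2)"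
    using assms(1-5) by (rule cmod_bilinear_orthonormal_le)
  moreover have "(\<Sum>i\<in>F1. (cmod (\<phi> (u i)))^2) * (\<Sum>j\<in>F2. (cmod (\<phi> (v j)))^2) \<le> 1"
    using assms(6,7) by (simp add: norm mult_le_one sum_nonneg)
  ultimately have "(norm (\<Sum>i\<in>F1. \<Sum>j\<in>F2. u i * of_real (X i j) * v j))^2 \<le> 1"
    by simp
  then show ?thesis
    by (simp add: power_le_one_iff abs_square_le_1)
qed

lemma op_norm_orthonormal_columns_le_1:
  fixes X :: "nat \<Rightarrow> nat \<Rightarrow> real"
  assumes "finite I" and "\<And>i j. X i j \<noteq> 0 \<Longrightarrow> i \<in> I \<and> j \<in> J" and "orthonormal_columns I J X"
  shows "op_norm R C (\<lambda>i j. (of_real (X i j) :: 'f::real_normed_field)) \<le> 1"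
  unfolding op_norm_def
  by (rule Sup_least) (auto intro!: norm_bilinear_orthonormal_le_1[OF assms(1) _ _ assms(2,3)])

lemma op_norm_ge:
  fixes A :: "nat \<Rightarrow> nat \<Rightarrow> 'f::real_normed_field"
  assumes "finite F1" "F1 \<subseteq> R" "finite F2" "F2 \<subseteq> C"
    and "(\<Sum>i\<in>F1. (norm (u i))^2) \<le> 1" "(\<Sum>j\<in>F2. (norm (v j))^2) \<le> 1"
  shows "ereal (norm (\<Sum>i\<in>F1. \<Sum>j\<in>F2. u i * A i j * v j)) \<le> op_norm R C A"
  unfolding op_norm_def by (rule Sup_upper) (use assms in blast)

lemma schur_norm_ge:
  fixes X :: "nat \<Rightarrow> nat \<Rightarrow> 'f::real_normed_field"
  assumes "op_norm R C X \<le> 1"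
  shows "op_norm R C (\<lambda>i j. biadj G i j * X i j) \<le> schur_norm TYPE('f) R C G"
  unfolding schur_norm_def by (rule Sup_upper) (use assms in blast)

definition induces_matrix ::
    "nat set \<Rightarrow> nat set \<Rightarrow> (nat \<times> nat) set \<Rightarrow> nat list \<Rightarrow> nat list \<Rightarrow> real list list \<Rightarrow> bool" where
  "induces_matrix R C G rs cs M \<longleftrightarrow> distinct rs \<and> distinct cs \<and> set rs \<subseteq> R \<and> set cs \<subseteq> C \<and>
     length M = length rs \<and> (\<forall>row\<in>set M. length row = length cs) \<and>
     (\<forall>i<length rs. \<forall>j<length cs. M ! i ! j = biadj G (rs ! i) (cs ! j))"

lemma schur_norm_ge_bilinear:
  fixes Y :: "nat \<Rightarrow> nat \<Rightarrow> real" and u v :: "nat \<Rightarrow> real"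
  assumes "finite I" "I \<subseteq> R" "finite J" "J \<subseteq> C"
    and support: "\<And>i j. Y i j \<noteq> 0 \<Longrightarrow> i \<in> I \<and> j \<in> J" and "orthonormal_columns I J Y"
    and "(\<Sum>i\<in>I. (u i)^2) \<le> 1" "(\<Sum>j\<in>J. (v j)^2) \<le> 1"
  shows "ereal \<bar>\<Sum>i\<in>I. \<Sum>j\<in>J. u i * biadj G i j * Y i j * v j\<bar> \<le> schur_norm TYPE('f::real_normed_field) R C G"
proof -
  have "(\<Sum>i\<in>I. \<Sum>j\<in>J. of_real (u i) * (biadj G i j * of_real (Y i j)) * of_real (v j))
      = (of_real (\<Sum>i\<in>I. \<Sum>j\<in>J. u i * biadj G i j * Y i j * v j) :: 'f)"
  proof -
    have "of_real (biadj G i j) = (biadj G i j :: 'f)" for i j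
      by (simp add: biadj_def)
    then show ?thesis
      by (simp add: mult.assoc)
  qed
  moreover have "ereal (norm (\<Sum>i\<in>I. \<Sum>j\<in>J. (of_real (u i) :: 'f) * (biadj G i j * of_real (Y i j)) * of_real (v j)))
      \<le> op_norm R C (\<lambda>i j. biadj G i j * (of_real (Y i j) :: 'f))"
    by (rule op_norm_ge) (use assms in simp_all)
  ultimately have "ereal \<bar>\<Sum>i\<in>I. \<Sum>j\<in>J. u i * biadj G i j * Y i j * v j\<bar>
      \<le> op_norm R C (\<lambda>i j. biadj G i j * (of_real (Y i j) :: 'f))"
    by (simp only: norm_of_real)
  also have "\<dots> \<le> schur_norm TYPE('f) R C G"
    using op_norm_orthonormal_columns_le_1[OF \<open>finite I\<close> support \<open>orthonormal_columns I J Y\<close>]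
    by (rule schur_norm_ge)
  finally show ?thesis .
qed

lemma orthonormal_columns_reindex:
  fixes X :: "nat \<Rightarrow> nat \<Rightarrow> real"
  assumes orth: "orthonormal_columns {..<n} {..<m} X"
    and inj: "inj_on \<rho> {..<n}" "inj_on \<kappa> {..<m}"
    and left_inv: "\<And>i. i < n \<Longrightarrow> \<rho>' (\<rho> i) = i" and left_inv': "\<And>j. j < m \<Longrightarrow> \<kappa>' (\<kappa> j) = j"
  shows "orthonormal_columns (\<rho> ` {..<n}) (\<kappa> ` {..<m})
           (\<lambda>i j. if i \<in> \<rho> ` {..<n} \<and> j \<in> \<kappa> ` {..<m} then X (\<rho>' i) (\<kappa>' j) else 0)"
    (is "orthonormal_columns ?I ?J ?Y")
  unfolding orthonormal_columns_def
proof (intro ballI)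
  fix j k assume "j \<in> ?J" "k \<in> ?J"
  then obtain j' k' where jk: "j' < m" "j = \<kappa> j'" "k' < m" "k = \<kappa> k'"
    by auto
  have "(\<Sum>i\<in>?I. ?Y i j * ?Y i k) = (\<Sum>i<n. X i j' * X i k')"
    using inj(1) jk by (simp add: sum.reindex left_inv left_inv')
  also have "\<dots> = (if j = k then 1 else 0)"
    using orth jk inj(2) unfolding orthonormal_columns_def by (auto dest: inj_onD)
  finally show "(\<Sum>i\<in>?I. ?Y i j * ?Y i k) = (if j = k then 1 else 0)" .
qed

lemma schur_norm_ge_induces_matrix:
  fixes X :: "nat \<Rightarrow> nat \<Rightarrow> real" and u v :: "nat \<Rightarrow> real"
  assumes induced: "induces_matrix R C G rs cs M"
    and orth: "orthonormal_columns {..<length rs} {..<length cs} X"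
    and u: "(\<Sum>i<length rs. (u i)^2) \<le> 1" and v: "(\<Sum>j<length cs. (v j)^2) \<le> 1"
    and bound: "t \<le> (\<Sum>i<length rs. \<Sum>j<length cs. u i * M ! i ! j * X i j * v j)"
  shows "ereal t \<le> schur_norm TYPE('f::real_normed_field) R C G"
proof -
  let ?n = "length rs" and ?m = "length cs"
  have inj: "inj_on ((!) rs) {..<?n}" "inj_on ((!) cs) {..<?m}"
    using induced unfolding induces_matrix_def by (auto intro: inj_on_nth)
  define row where "row = inv_into {..<?n} ((!) rs)"
  define col where "col = inv_into {..<?m} ((!) cs)"
  have row: "row (rs ! i) = i" if "i < ?n" for i
    unfolding row_def using inj(1) that by simp
  have col: "col (cs ! j) = j" if "j < ?m" for j
    unfolding col_def using inj(2) that by simp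
  define I where "I = (!) rs ` {..<?n}"
  define J where "J = (!) cs ` {..<?m}"
  have "set rs = I" "set cs = J"
    unfolding I_def J_def by (auto simp: in_set_conv_nth)
  define Y where "Y i j = (if i \<in> I \<and> j \<in> J then X (row i) (col j) else 0)" for i j
  have orth_Y: "orthonormal_columns I J Y"
    unfolding I_def J_def Y_def using orth inj row col by (rule orthonormal_columns_reindex)
  moreover have "(\<Sum>i\<in>I. (u (row i))^2) = (\<Sum>i<?n. (u i)^2)"
    unfolding I_def using inj(1) by (simp add: sum.reindex row)
  moreover have "(\<Sum>j\<in>J. (v (col j))^2) = (\<Sum>j<?m. (v j)^2)"
    unfolding J_def using inj(2) by (simp add: sum.reindex col)
  ultimately have "ereal \<bar>\<Sum>i\<in>I. \<Sum>j\<in>J. u (row i) * biadj G i j * Y i j * v (col j)\<bar>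
      \<le> schur_norm TYPE('f) R C G"
    using induced u v \<open>set rs = I\<close> \<open>set cs = J\<close> unfolding induces_matrix_def
    by (intro schur_norm_ge_bilinear[OF _ _ _ _ _ orth_Y]) (auto simp: Y_def split: if_splits)
  moreover have "(\<Sum>i\<in>I. \<Sum>j\<in>J. u (row i) * biadj G i j * Y i j * v (col j))
      = (\<Sum>i<?n. \<Sum>j<?m. u i * M ! i ! j * X i j * v j)"
    using induced inj unfolding I_def J_def induces_matrix_def
    by (simp add: sum.reindex Y_def I_def J_def row col)
  ultimately show ?thesis
    using bound by (simp add: order_trans[rotated])
qed

lemma orthonormal_columns_reflection:
  fixes f :: "nat \<Rightarrow> real"
  assumes N: "N = (\<Sum>i<n. (f i)^2)" "N \<noteq> 0"
  shows "orthonormal_columns {..<n} {..<n} (\<lambda>i j. (if i = j then 1 else 0) - 2 * f i * f j / N)"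
  unfolding orthonormal_columns_def
proof (intro ballI)
  fix j k assume "j \<in> {..<n}" "k \<in> {..<n}"
  have delta: "(\<Sum>i<n. (if i = l then 1 else 0) * g i) = g l" if "l \<in> {..<n}" for l and g :: "nat \<Rightarrow> real"
  proof -
    have "(\<Sum>i<n. (if i = l then 1 else 0) * g i) = (\<Sum>i<n. if i = l then g i else 0)"
      by (intro sum.cong) auto
    then show ?thesis
      using that by simp
  qed
  define p where "p i = 2 * f i * f j / N" for i
  define q where "q i = 2 * f i * f k / N" for i
  have "(\<Sum>i<n. ((if i = j then 1 else 0) - 2 * f i * f j / N) * ((if i = k then 1 else 0) - 2 * f i * f k / N))
    = (\<Sum>i<n. (if i = j then 1 else 0) * (if i = k then 1 else 0) - (if i = j then 1 else 0) * q i
         - (if i = k then 1 else 0) * p i + (f i)^2 * (4 * f j * f k / N^2))"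
    by (intro sum.cong refl) (simp add: p_def q_def algebra_simps power2_eq_square)
  also have "\<dots> = (\<Sum>i<n. (if i = j then 1 else 0) * (if i = k then 1 else 0)) - (\<Sum>i<n. (if i = j then 1 else 0) * q i)
      - (\<Sum>i<n. (if i = k then 1 else 0) * p i) + (\<Sum>i<n. (f i)^2) * (4 * f j * f k / N^2)"
    by (simp add: sum.distrib sum_subtractf sum_distrib_right sum_divide_distrib)
  also have "\<dots> = (if j = k then 1 else 0) - q j - p k + N * (4 * f j * f k / N^2)"
    using delta[OF \<open>j \<in> {..<n}\<close>, of "\<lambda>i. if i = k then 1 else 0"] delta[OF \<open>j \<in> {..<n}\<close>, of q]
      delta[OF \<open>k \<in> {..<n}\<close>, of p] N(1)
    by simp
  also have "\<dots> = (if j = k then 1 else 0)"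
    using N(2) by (simp add: p_def q_def power2_eq_square field_simps)
  finally show "(\<Sum>i<n. ((if i = j then 1 else 0) - 2 * f i * f j / N) * ((if i = k then 1 else 0) - 2 * f i * f k / N))
    = (if j = k then 1 else 0)" .
qed

lemma sum_lessThan_3: "(\<Sum>i<3. g i) = g 0 + g 1 + g (2::nat)"
  by (simp add: numeral_3_eq_3 numeral_2_eq_2)

lemma sum_lessThan_4: "(\<Sum>i<4. g i) = g 0 + g 1 + g 2 + g (3::nat)"
  by (simp add: numeral_3_eq_3 numeral_2_eq_2 eval_nat_numeral)

text \<open>The Schur norm of \<open>[[1,1,0],[1,1,1],[0,1,0]]\<close>; the certificate below attains it.\<close>

definition schur_norm_T :: real where
  "schur_norm_T = (9 + 4 * sqrt 6) / 15"

lemma T_certificate_value: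
  fixes s a b c N :: real
  assumes s2: "s * s = 6" and "2 < s" and a2: "a * a = (6 + s) / 30" and b2: "b * b = (8 + 3 * s) / 30"
    and c2: "c * c = (8 - 2 * s) / 15" and N: "N = (12 + 4 * s) / 3"
  shows "a * a + b * b - 2 / N * (4 * (a * a) * (a * a) - 8 * (a * a) * (b * b)
           + 4 * (b * b) * (b * b) - 4 * (2 + s) * (b * b) * (c * c)) = (9 + 4 * s) / 15"
proof -
  have quartic: "4 * ((6 + s) / 30) * ((6 + s) / 30) - 8 * ((6 + s) / 30) * ((8 + 3 * s) / 30)
      + 4 * ((8 + 3 * s) / 30) * ((8 + 3 * s) / 30) - 4 * (2 + s) * ((8 + 3 * s) / 30) * ((8 - 2 * s) / 15)
      = - (6 + 2 * s) * (2 + 2 * s) / 45"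
    using s2 by (simp add: field_simps; algebra)
  have scaled: "2 / N * (- (6 + 2 * s) * (2 + 2 * s) / 45) = - (2 + 2 * s) / 15"
    unfolding N using \<open>2 < s\<close> by (simp add: field_simps)
  have "a * a + b * b - 2 / N * (4 * (a * a) * (a * a) - 8 * (a * a) * (b * b)
      + 4 * (b * b) * (b * b) - 4 * (2 + s) * (b * b) * (c * c))
      = (6 + s) / 30 + (8 + 3 * s) / 30 - (- (2 + 2 * s) / 15)"
    by (simp only: a2 b2 c2 quartic scaled)
  also have "\<dots> = (9 + 4 * s) / 15"
    by (simp add: field_simps)
  finally show ?thesis .
qed

lemma schur_norm_ge_T:
  assumes "induces_matrix R C G rs cs [[1, 1, 0], [1, 1, 1], [0, 1, 0]]"
  shows "ereal schur_norm_T \<le> schur_norm TYPE('f::real_normed_field) R C G"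
proof -
  define s where "s = sqrt 6"
  define a where "a = sqrt ((6 + s) / 30)"
  define b where "b = sqrt ((8 + 3 * s) / 30)"
  define c where "c = sqrt ((8 - 2 * s) / 15)"
  define u where "u i = [a, b, c] ! i" for i
  define f where "f i = [- 2 * a, 2 * b, - (2 + s) * c] ! i" for i
  define N where "N = (\<Sum>i<3. (f i)^2)"
  define X where "X i j = (if i = j then 1 else 0) - 2 * f i * f j / N" for i j
  have "length rs = 3" "length cs = 3"
    using assms unfolding induces_matrix_def by auto
  have s2: "s * s = 6"
    unfolding s_def by simp
  have "2 < s" "s < 3"
    unfolding s_def by (simp_all add: real_less_rsqrt real_less_lsqrt)
  then have a2: "a * a = (6 + s) / 30" and b2: "b * b = (8 + 3 * s) / 30" and c2: "c * c = (8 - 2 * s) / 15"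
    unfolding a_def b_def c_def by simp_all
  have "N = 4 * (a * a) + 4 * (b * b) + (4 + 4 * s + s * s) * (c * c)"
    unfolding N_def f_def sum_lessThan_3 by (simp add: power2_eq_square algebra_simps)
  then have N: "N = (12 + 4 * s) / 3"
    unfolding a2 b2 c2 using s2 by (simp add: field_simps)
  have "orthonormal_columns {..<3} {..<3} X"
    unfolding X_def using \<open>2 < s\<close> by (intro orthonormal_columns_reflection[OF N_def]) (simp add: N)
  moreover have "(\<Sum>i<3. (u i)^2) \<le> 1"
    unfolding u_def sum_lessThan_3 using a2 b2 c2 by (simp add: power2_eq_square field_simps)
  moreover have "(\<Sum>i<3. \<Sum>j<3. u i * [[1, 1, 0], [1, 1, 1], [0, 1, 0]] ! i ! j * X i j * u j)
      = a * a + b * b - 2 / N * (4 * (a * a) * (a * a) - 8 * (a * a) * (b * b)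
          + 4 * (b * b) * (b * b) - 4 * (2 + s) * (b * b) * (c * c))"
    unfolding sum_lessThan_3 u_def X_def f_def
    by (simp add: algebra_simps diff_divide_distrib add_divide_distrib)
  then have "schur_norm_T = (\<Sum>i<3. \<Sum>j<3. u i * [[1, 1, 0], [1, 1, 1], [0, 1, 0]] ! i ! j * X i j * u j)"
    using T_certificate_value[OF s2 \<open>2 < s\<close> a2 b2 c2 N] unfolding schur_norm_T_def s_def[symmetric]
    by (simp only:)
  ultimately show ?thesis
    using schur_norm_ge_induces_matrix[OF assms, of X u u schur_norm_T, where 'f = 'f]
    unfolding \<open>length rs = 3\<close> \<open>length cs = 3\<close> by simp
qed

lemma schur_norm_T_le: "schur_norm_T \<le> 94 / 75"
proof -
  have "sqrt 6 \<le> sqrt ((49 / 20)^2)"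
    by (intro real_sqrt_le_mono) (simp add: power2_eq_square)
  then show ?thesis
    unfolding schur_norm_T_def by simp
qed

lemma schur_norm_ge_A:
  assumes "induces_matrix R C G rs cs [[1, 1, 0], [1, 1, 1], [1, 0, 1]]"
  shows "ereal schur_norm_T \<le> schur_norm TYPE('f::real_normed_field) R C G"
proof -
  have "length rs = 3" "length cs = 3"
    using assms unfolding induces_matrix_def by auto
  define X where "X i j = [[99, 52, -72], [12, 99, 88], [88, -72, 69]] ! i ! j / (133 :: real)" for i j
  define u where "u i = [53/100, 13/20, 53/100 :: real] ! i" for i
  define v where "v j = [13/20, 53/100, 53/100 :: real] ! j" for j
  show ?thesis
  proof (rule schur_norm_ge_induces_matrix[OF assms, of X u v])
    show "orthonormal_columns {..<length rs} {..<length cs} X"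
      unfolding orthonormal_columns_def X_def \<open>length rs = 3\<close> \<open>length cs = 3\<close>
      by (simp add: sum_lessThan_3 lessThan_nat_numeral)
    show "(\<Sum>i<length rs. (u i)^2) \<le> 1" "(\<Sum>j<length cs. (v j)^2) \<le> 1"
      unfolding u_def v_def \<open>length rs = 3\<close> \<open>length cs = 3\<close> by (simp_all add: sum_lessThan_3 power2_eq_square)
    have "94 / 75 \<le> (\<Sum>i<3. \<Sum>j<3. u i * [[1, 1, 0], [1, 1, 1], [1, 0, 1 :: real]] ! i ! j * X i j * v j)"
      unfolding X_def u_def v_def by (simp add: sum_lessThan_3)
    then show "schur_norm_T \<le> (\<Sum>i<length rs. \<Sum>j<length cs. u i * [[1, 1, 0], [1, 1, 1], [1, 0, 1]] ! i ! j * X i j * v j)"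
      unfolding \<open>length rs = 3\<close> \<open>length cs = 3\<close> using schur_norm_T_le by linarith
  qed
qed

lemma schur_norm_ge_K:
  assumes "induces_matrix R C G rs cs [[1, 1, 1, 1], [1, 0, 0, 0], [0, 1, 0, 0], [0, 0, 1, 0]]"
  shows "ereal schur_norm_T \<le> schur_norm TYPE('f::real_normed_field) R C G"
proof -
  have "length rs = 4" "length cs = 4"
    using assms unfolding induces_matrix_def by auto
  define X where "X i j = [[3, 3, 3, 3], [5, -1, -1, -3], [-1, 5, -1, -3], [-1, -1, 5, -3]] ! i ! j / (6 :: real)"
    for i j
  define u where "u i = [387/500, 73/200, 73/200, 73/200 :: real] ! i" for i
  define v where "v j = [1367/2500, 1367/2500, 1367/2500, 8/25 :: real] ! j" for j
  show ?thesis
  proof (rule schur_norm_ge_induces_matrix[OF assms, of X u v])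
    show "orthonormal_columns {..<length rs} {..<length cs} X"
      unfolding orthonormal_columns_def X_def \<open>length rs = 4\<close> \<open>length cs = 4\<close>
      by (simp add: sum_lessThan_4 lessThan_nat_numeral)
    show "(\<Sum>i<length rs. (u i)^2) \<le> 1" "(\<Sum>j<length cs. (v j)^2) \<le> 1"
      unfolding u_def v_def \<open>length rs = 4\<close> \<open>length cs = 4\<close> by (simp_all add: sum_lessThan_4 power2_eq_square)
    have "94 / 75 \<le> (\<Sum>i<4. \<Sum>j<4. u i * [[1, 1, 1, 1], [1, 0, 0, 0], [0, 1, 0, 0], [0, 0, 1, 0 :: real]] ! i ! j * X i j * v j)"
      unfolding X_def u_def v_def by (simp add: sum_lessThan_4)
    then show "schur_norm_T \<le> (\<Sum>i<length rs. \<Sum>j<length cs.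
        u i * [[1, 1, 1, 1], [1, 0, 0, 0], [0, 1, 0, 0], [0, 0, 1, 0]] ! i ! j * X i j * v j)"
      unfolding \<open>length rs = 4\<close> \<open>length cs = 4\<close> using schur_norm_T_le by linarith
  qed
qed

lemma op_norm_transpose_le:
  "op_norm C R (\<lambda>i j. A j i) \<le> op_norm R C (A :: nat \<Rightarrow> nat \<Rightarrow> 'f::real_normed_field)"
  unfolding op_norm_def[of C R]
proof (rule Sup_least, clarify)
  fix F1 F2 and u v :: "nat \<Rightarrow> 'f"
  assume "finite F1" "F1 \<subseteq> C" "finite F2" "F2 \<subseteq> R"
    "(\<Sum>i\<in>F1. (norm (u i))^2) \<le> 1" "(\<Sum>j\<in>F2. (norm (v j))^2) \<le> 1"
  moreover have "(\<Sum>i\<in>F1. \<Sum>j\<in>F2. u i * A j i * v j) = (\<Sum>j\<in>F2. \<Sum>i\<in>F1. v j * A j i * u i)"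
    by (subst sum.swap) (simp add: mult.commute mult.left_commute)
  ultimately show "ereal (norm (\<Sum>i\<in>F1. \<Sum>j\<in>F2. u i * A j i * v j)) \<le> op_norm R C A"
    using op_norm_ge[of F2 R F1 C v u A] by simp
qed

lemma op_norm_transpose:
  "op_norm C R (\<lambda>i j. A j i) = op_norm R C (A :: nat \<Rightarrow> nat \<Rightarrow> 'f::real_normed_field)"
  using op_norm_transpose_le[of C R A] op_norm_transpose_le[of R C "\<lambda>i j. A j i"] by simp

lemma schur_norm_converse_le:
  "schur_norm TYPE('f::real_normed_field) C R (G\<inverse>) \<le> schur_norm TYPE('f) R C G"
  unfolding schur_norm_def[where R = C and C = R]
proof (rule Sup_least, clarify)
  fix X :: "nat \<Rightarrow> nat \<Rightarrow> 'f"
  assume "op_norm C R X \<le> 1"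
  then have "op_norm R C (\<lambda>i j. X j i) \<le> 1"
    using op_norm_transpose[of R C X] by simp
  then have "op_norm R C (\<lambda>i j. biadj G i j * X j i) \<le> schur_norm TYPE('f) R C G"
    by (rule schur_norm_ge)
  moreover have "biadj (G\<inverse>) i j = (biadj G j i :: 'f)" for i j
    unfolding biadj_def by simp
  ultimately show "op_norm C R (\<lambda>i j. biadj (G\<inverse>) i j * X i j) \<le> schur_norm TYPE('f) R C G"
    using op_norm_transpose[of C R "\<lambda>i j. biadj G i j * X j i"] by simp
qed

lemma schur_norm_converse:
  "schur_norm TYPE('f::real_normed_field) C R (G\<inverse>) = schur_norm TYPE('f) R C G"
  using schur_norm_converse_le[of C R G, where 'f = 'f] schur_norm_converse_le[of R C "G\<inverse>", where 'f = 'f]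
  by simp

lemma twin_free_converse: "twin_free C R (G\<inverse>) \<longleftrightarrow> twin_free R C G"
  unfolding twin_free_def row_nbrs_def col_nbrs_def by auto

lemma row_nbrs_converse: "row_nbrs R (G\<inverse>) c = col_nbrs R G c"
  unfolding row_nbrs_def col_nbrs_def by simp

section \<open>Twin-free graphs of small Schur norm\<close>

text \<open>Rows \<open>p, q\<close> and columns \<open>x, y, z\<close> inducing \<open>[[1,1,0],[1,1,1]]\<close>; the remaining
  distinctness conditions follow from the edge pattern.\<close>

definition H_configuration :: "nat set \<Rightarrow> nat set \<Rightarrow> (nat \<times> nat) set \<Rightarrow> bool" where
  "H_configuration R C G \<longleftrightarrow> (\<exists>p\<in>R. \<exists>q\<in>R. \<exists>x\<in>C. \<exists>y\<in>C. \<exists>z\<in>C. x \<noteq> y \<and>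
     (p, x) \<in> G \<and> (p, y) \<in> G \<and> (p, z) \<notin> G \<and> (q, x) \<in> G \<and> (q, y) \<in> G \<and> (q, z) \<in> G)"

lemma H_configuration_separated_schur_norm_ge:
  assumes "p \<in> R" "q \<in> R" "s \<in> R" "x \<in> C" "y \<in> C" "z \<in> C" "x \<noteq> y"
    and "(p, x) \<in> G" "(p, y) \<in> G" "(p, z) \<notin> G" "(q, x) \<in> G" "(q, y) \<in> G" "(q, z) \<in> G"
    and "(s, x) \<in> G" "(s, y) \<notin> G"
  shows "ereal schur_norm_T \<le> schur_norm TYPE('f::real_normed_field) R C G"
proof (cases "(s, z) \<in> G")
  case True
  with assms have "induces_matrix R C G [p, q, s] [x, y, z] [[1, 1, 0], [1, 1, 1], [1, 0, 1]]"
    by (auto simp: induces_matrix_def biadj_def numeral_3_eq_3 All_less_Suc)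
  then show ?thesis
    by (rule schur_norm_ge_A)
next
  case False
  with assms have "induces_matrix R C G [p, q, s] [y, x, z] [[1, 1, 0], [1, 1, 1], [0, 1, 0]]"
    by (auto simp: induces_matrix_def biadj_def numeral_3_eq_3 All_less_Suc)
  then show ?thesis
    by (rule schur_norm_ge_T)
qed

lemma twin_free_not_H_configuration:
  assumes "twin_free R C G" and "schur_norm TYPE('f::real_normed_field) R C G < ereal schur_norm_T"
  shows "\<not> H_configuration R C G"
proof
  assume "H_configuration R C G"
  then obtain p q x y z where pq: "p \<in> R" "q \<in> R" and xyz: "x \<in> C" "y \<in> C" "z \<in> C" "x \<noteq> y"
    and edges: "(p, x) \<in> G" "(p, y) \<in> G" "(p, z) \<notin> G" "(q, x) \<in> G" "(q, y) \<in> G" "(q, z) \<in> G"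
    unfolding H_configuration_def by blast
  have "col_nbrs R G x \<noteq> col_nbrs R G y"
    using assms(1) xyz unfolding twin_free_def by blast
  then obtain s where "s \<in> R" "(s, x) \<in> G \<longleftrightarrow> (s, y) \<notin> G"
    unfolding col_nbrs_def by auto
  then have "ereal schur_norm_T \<le> schur_norm TYPE('f) R C G"
    using H_configuration_separated_schur_norm_ge[OF pq _ xyz(1-4) edges]
      H_configuration_separated_schur_norm_ge[OF pq _ xyz(2,1,3) xyz(4)[symmetric]] edges
    by (cases "(s, x) \<in> G") auto
  with assms(2) show False
    by simp
qed

lemma H_configuration_of_bij:
  assumes "R0 \<subseteq> R" "C0 \<subseteq> C" "bij_betw f R0 H_rows" "bij_betw g C0 H_cols"
    and edges: "\<forall>r\<in>R0. \<forall>c\<in>C0. (r, c) \<in> G \<longleftrightarrow> (f r, g c) \<in> H_edges"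
  shows "H_configuration R C G"
proof -
  have "f ` R0 = {0, 1}" "g ` C0 = {0, 1, 2}"
    using assms(3,4) unfolding bij_betw_def H_rows_def H_cols_def by auto
  then have "0 \<in> f ` R0" "1 \<in> f ` R0" "0 \<in> g ` C0" "1 \<in> g ` C0" "2 \<in> g ` C0"
    by auto
  then obtain p q x y z where pq: "p \<in> R0" "f p = 0" "q \<in> R0" "f q = 1"
    and xyz: "x \<in> C0" "g x = 0" "y \<in> C0" "g y = 1" "z \<in> C0" "g z = 2"
    unfolding image_iff by (metis (no_types))
  have "(p, x) \<in> G" "(p, y) \<in> G" "(p, z) \<notin> G" "(q, x) \<in> G" "(q, y) \<in> G" "(q, z) \<in> G"
    using edges pq xyz unfolding H_edges_def by auto
  moreover have "x \<noteq> y"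
    using xyz by auto
  ultimately show ?thesis
    unfolding H_configuration_def using assms(1,2) pq xyz by blast
qed

lemma has_induced_H_configuration:
  assumes "has_induced R C G H_rows H_cols H_edges"
  shows "H_configuration R C G \<or> H_configuration C R (G\<inverse>)"
proof -
  obtain R0 C0 where "R0 \<subseteq> R" "C0 \<subseteq> C" and iso: "bip_iso R0 C0 (G \<inter> R0 \<times> C0) H_rows H_cols H_edges"
    using assms unfolding has_induced_def by blast
  from iso show ?thesis
    unfolding bip_iso_def
  proof (elim disjE exE conjE)
    fix f g assume "bij_betw f R0 H_rows" "bij_betw g C0 H_cols"
      and "\<forall>r\<in>R0. \<forall>c\<in>C0. (r, c) \<in> G \<inter> R0 \<times> C0 \<longleftrightarrow> (f r, g c) \<in> H_edges"
    then have "H_configuration R C G"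
      using \<open>R0 \<subseteq> R\<close> \<open>C0 \<subseteq> C\<close> by (intro H_configuration_of_bij[of R0 R C0 C f g]) auto
    then show ?thesis ..
  next
    fix f g assume "bij_betw f R0 H_cols" "bij_betw g C0 H_rows"
      and "\<forall>r\<in>R0. \<forall>c\<in>C0. (r, c) \<in> G \<inter> R0 \<times> C0 \<longleftrightarrow> (g c, f r) \<in> H_edges"
    then have "H_configuration C R (G\<inverse>)"
      using \<open>R0 \<subseteq> R\<close> \<open>C0 \<subseteq> C\<close> by (intro H_configuration_of_bij[of C0 C R0 R g f]) auto
    then show ?thesis ..
  qed
qed

lemma obtain_subset_with_card_4:
  assumes "\<not> (finite N \<and> card N \<le> 3)"
  obtains M where "M \<subseteq> N" "finite M" "card M = 4"
proof (cases "finite N")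
  case True
  with assms have "4 \<le> card N"
    by simp
  then show thesis
    using obtain_subset_with_card_n that by blast
next
  case False
  then show thesis
    using infinite_arbitrarily_large that by blast
qed

lemma all_but_one:
  assumes "\<And>x y. x \<in> N \<Longrightarrow> y \<in> N \<Longrightarrow> x \<noteq> y \<Longrightarrow> P x \<or> P y" and "N \<noteq> {}"
  shows "\<exists>e\<in>N. \<forall>x\<in>N. x \<noteq> e \<longrightarrow> P x"
  using assms by blast

lemma separating_row_private:
  assumes "\<not> H_configuration R C G" "r \<in> R" "s \<in> R" "N \<subseteq> C" "\<forall>c\<in>N. (r, c) \<in> G"
    and "a \<in> N" "b \<in> N" "(s, a) \<in> G" "(s, b) \<notin> G"
  shows "\<forall>c\<in>N. c \<noteq> a \<longrightarrow> (s, c) \<notin> G"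
proof (intro ballI impI notI)
  fix c assume "c \<in> N" "c \<noteq> a" "(s, c) \<in> G"
  moreover have "a \<in> C" "b \<in> C" "c \<in> C" "(r, a) \<in> G" "(r, b) \<in> G" "(r, c) \<in> G"
    using assms(4-7) \<open>c \<in> N\<close> by auto
  ultimately have "H_configuration R C G"
    using assms(2,3,8,9) unfolding H_configuration_def by blast
  with assms(1) show False ..
qed

text \<open>A row containing one neighbour of \<open>r\<close> but not another contains no third one, since
  otherwise an \<open>H_configuration\<close> arises; as neighbours are not twins, among any two of them one
  has a private row.\<close>

lemma twin_free_private_rows:
  assumes "twin_free R C G" "\<not> H_configuration R C G" "r \<in> R" "N \<subseteq> C" "\<forall>c\<in>N. (r, c) \<in> G"
    and "N \<noteq> {}"
  shows "\<exists>e\<in>N. \<forall>c\<in>N. c \<noteq> e \<longrightarrow> (\<exists>s\<in>R. (s, c) \<in> G \<and> (\<forall>c'\<in>N. c' \<noteq> c \<longrightarrow> (s, c') \<notin> G))"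
proof (rule all_but_one[OF _ \<open>N \<noteq> {}\<close>])
  fix c c' assume "c \<in> N" "c' \<in> N" "c \<noteq> c'"
  then have "col_nbrs R G c \<noteq> col_nbrs R G c'"
    using assms(1,4) unfolding twin_free_def by blast
  then obtain s where s: "s \<in> R" "(s, c) \<in> G \<longleftrightarrow> (s, c') \<notin> G"
    unfolding col_nbrs_def by auto
  then show "(\<exists>s\<in>R. (s, c) \<in> G \<and> (\<forall>c''\<in>N. c'' \<noteq> c \<longrightarrow> (s, c'') \<notin> G)) \<or>
      (\<exists>s\<in>R. (s, c') \<in> G \<and> (\<forall>c''\<in>N. c'' \<noteq> c' \<longrightarrow> (s, c'') \<notin> G))"
    using separating_row_private[OF assms(2,3) s(1) assms(4,5)] \<open>c \<in> N\<close> \<open>c' \<in> N\<close>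
    by (cases "(s, c) \<in> G") blast+
qed

text \<open>The private rows of three neighbours, together with \<open>r\<close>, induce the last certificate matrix.\<close>

lemma twin_free_row_degree_le_3:
  assumes "twin_free R C G" and "schur_norm TYPE('f::real_normed_field) R C G < ereal schur_norm_T"
    and "r \<in> R"
  shows "finite (row_nbrs C G r) \<and> card (row_nbrs C G r) \<le> 3"
proof (rule ccontr)
  assume "\<not> ?thesis"
  then obtain N where N: "N \<subseteq> row_nbrs C G r" "finite N" "card N = 4"
    by (rule obtain_subset_with_card_4)
  then have N_sub: "N \<subseteq> C" and r_N: "\<forall>c\<in>N. (r, c) \<in> G" and "N \<noteq> {}"
    unfolding row_nbrs_def by auto
  obtain e where "e \<in> N"
    and private_nbr: "\<And>c. c \<in> N \<Longrightarrow> c \<noteq> e \<Longrightarrow> \<exists>s\<in>R. (s, c) \<in> G \<and> (\<forall>c'\<in>N. c' \<noteq> c \<longrightarrow> (s, c') \<notin> G)"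
    using twin_free_private_rows[OF assms(1) twin_free_not_H_configuration[OF assms(1,2)] assms(3)
        N_sub r_N \<open>N \<noteq> {}\<close>] by blast
  have "card (N - {e}) = 3"
    using N(2,3) \<open>e \<in> N\<close> by simp
  then obtain a b d where abd: "N - {e} = {a, b, d}" "a \<noteq> b" "b \<noteq> d" "a \<noteq> d"
    by (auto simp: card_3_iff)
  then have in_N: "a \<in> N" "b \<in> N" "d \<in> N" and ne: "a \<noteq> e" "b \<noteq> e" "d \<noteq> e"
    by auto
  obtain sa where sa: "sa \<in> R" "(sa, a) \<in> G" "\<And>c. c \<in> N \<Longrightarrow> c \<noteq> a \<Longrightarrow> (sa, c) \<notin> G"
    using private_nbr[OF in_N(1) ne(1)] by blast
  obtain sb where sb: "sb \<in> R" "(sb, b) \<in> G" "\<And>c. c \<in> N \<Longrightarrow> c \<noteq> b \<Longrightarrow> (sb, c) \<notin> G"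
    using private_nbr[OF in_N(2) ne(2)] by blast
  obtain sd where sd: "sd \<in> R" "(sd, d) \<in> G" "\<And>c. c \<in> N \<Longrightarrow> c \<noteq> d \<Longrightarrow> (sd, c) \<notin> G"
    using private_nbr[OF in_N(3) ne(3)] by blast
  have "(sa, b) \<notin> G" "(sa, d) \<notin> G" "(sa, e) \<notin> G" "(sb, a) \<notin> G" "(sb, d) \<notin> G" "(sb, e) \<notin> G"
    "(sd, a) \<notin> G" "(sd, b) \<notin> G" "(sd, e) \<notin> G"
    using sa(3) sb(3) sd(3) in_N \<open>e \<in> N\<close> abd ne by auto
  moreover have "(r, a) \<in> G" "(r, b) \<in> G" "(r, d) \<in> G" "(r, e) \<in> G"
    using r_N in_N \<open>e \<in> N\<close> by auto
  moreover have "{a, b, d, e} \<subseteq> C"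
    using N_sub in_N \<open>e \<in> N\<close> by auto
  ultimately have "induces_matrix R C G [r, sa, sb, sd] [a, b, d, e]
      [[1, 1, 1, 1], [1, 0, 0, 0], [0, 1, 0, 0], [0, 0, 1, 0]]"
    using sa(1,2) sb(1,2) sd(1,2) assms(3) abd(2-4) ne
    unfolding induces_matrix_def biadj_def by (auto simp: eval_nat_numeral All_less_Suc)
  then have "ereal schur_norm_T \<le> schur_norm TYPE('f) R C G"
    by (rule schur_norm_ge_K)
  with assms(2) show False
    by simp
qed

theorem lemma6p5:
  fixes R C :: "nat set" and G :: "(nat \<times> nat) set"
  assumes "in_Gamma R C G"
    and "twin_free R C G"
    and "schur_norm TYPE('f::real_normed_field) R C G < ereal ((9 + 4 * sqrt 6) / 15)"
  shows "\<not> has_induced R C G H_rows H_cols H_edges \<and>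
         (\<forall>r\<in>R. finite (row_nbrs C G r) \<and> card (row_nbrs C G r) \<le> 3) \<and>
         (\<forall>c\<in>C. finite (col_nbrs R G c) \<and> card (col_nbrs R G c) \<le> 3)"
proof -
  have small: "schur_norm TYPE('f) R C G < ereal schur_norm_T"
    using assms(3) unfolding schur_norm_T_def .
  have small': "schur_norm TYPE('f) C R (G\<inverse>) < ereal schur_norm_T"
    using small by (simp add: schur_norm_converse)
  have twin_free': "twin_free C R (G\<inverse>)"
    using assms(2) by (simp add: twin_free_converse)
  have "\<not> has_induced R C G H_rows H_cols H_edges"
    using has_induced_H_configuration twin_free_not_H_configuration[OF assms(2) small]
      twin_free_not_H_configuration[OF twin_free' small'] by blast
  moreover have "\<forall>r\<in>R. finite (row_nbrs C G r) \<and> card (row_nbrs C G r) \<le> 3"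
    using twin_free_row_degree_le_3[OF assms(2) small] by blast
  moreover have "\<forall>c\<in>C. finite (col_nbrs R G c) \<and> card (col_nbrs R G c) \<le> 3"
    using twin_free_row_degree_le_3[OF twin_free' small'] by (simp add: row_nbrs_converse)
  ultimately show ?thesis
    by blast
qed

end
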